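(* Let $p$ be a full-support skill distribution and $q$ a full-support perception with $p\succsim_{LR}q$ (the population is under-perceived). Let $\langle S',\pi'\rangle\succsim_G\langle S,\pi\rangle$ be signal structures with $\langle S',\pi'\rangle$ MLR. Then for every monotone firm $A\subset\mathcal{A}_M$, $$W_A(p,q,\langle S',\pi'\rangle)\ \ge\ W_A(p,q,\langle S,\pi\rangle).$$
   Context: Let $\Theta\subset\mathbb{R}$ be a finite set of skill types with $|\Theta|\ge2$. Tasks are vectors $a\in\mathcal{A}:=\mathbb{R}^\Theta$. A firm is a non-empty finite set $A\subset\mathcal{A}$. It is monotone if $A\subset\mathcal{A}_M:=\{a: a(\theta')>a(\theta)\text{ whenever }\theta'>\theta\}$. A signal structure $\langle S,\pi\rangle$ consists of a non-empty finite set $S$ and a map $\pi:S\times\Theta\to[0,1]$ with $\sum_s\pi(s|\theta)=1$, such that each $s$ has $\pi(s|\theta)>0$ for some $\theta$. Pay: - $p,q\in\Delta(\Theta)$ have full support. - $q_{\langle S,\pi\rangle}(\theta|s):=q(\theta)\pi(s|\theta)/\sum_{\theta'}q(\theta')\pi(s|\theta')$. - $w_A(s,q,\langle S,\pi\rangle):=\max_{a\in A}\sum_\theta q_{\langle S,\pi\rangle}(\theta|s)a(\theta)$. - $W_A(p,q,\langle S,\pi\rangle):=\sum_\theta p(\theta)\sum_s\pi(s|\theta)w_A(s,q,\langle S,\pi\rangle)$. Orders: - $q'\succsim_{LR}q$ means $q(\theta)q'(\theta')\ge q(\theta')q'(\theta)$ whenever $\theta'>\theta$. - $\langle S',\pi'\rangle\succsim_G\langle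 S,\pi\rangle$ means there exists $g:S\times S'\to[0,1]$ with $\sum_s g(s|s')=1$ for each $s'$ and $\pi(s|\theta)=\sum_{s'}g(s|s')\pi'(s'|\theta)$ for all $s,\theta$. - $\langle S,\pi\rangle$ is MLR if $S\subset\mathbb{R}$ and $\pi(s|\theta)\pi(s'|\theta')\ge\pi(s|\theta')\pi(s'|\theta)$ whenever $s'>s$, $\theta'>\theta$. *)

theory Defs
  imports "HOL-Analysis.Analysis"
begin

text \<open>Skill types: a finite set Th of reals with at least two elements.
Tasks are functions real \<Rightarrow> real, only their values on Th matter.\<close>

definition skill_types :: "real set \<Rightarrow> bool" where
  "skill_types Th \<longleftrightarrow> finite Th \<and> card Th \<ge> 2"

definition full_support :: "real set \<Rightarrow> (real \<Rightarrow> real) \<Rightarrow> bool" where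
  "full_support Th p \<longleftrightarrow> (\<forall>\<theta>\<in>Th. p \<theta> > 0) \<and> (\<Sum>\<theta>\<in>Th. p \<theta>) = 1"

definition firm :: "(real \<Rightarrow> real) set \<Rightarrow> bool" where
  "firm A \<longleftrightarrow> finite A \<and> A \<noteq> {}"

definition monotone_firm :: "real set \<Rightarrow> (real \<Rightarrow> real) set \<Rightarrow> bool" where
  "monotone_firm Th A \<longleftrightarrow> firm A \<and>
     (\<forall>a\<in>A. \<forall>\<theta>\<in>Th. \<forall>\<theta>'\<in>Th. \<theta>' > \<theta> \<longrightarrow> a \<theta>' > a \<theta>)"

definition signal_structure :: "real set \<Rightarrow> 's set \<Rightarrow> ('s \<Rightarrow> real \<Rightarrow> real) \<Rightarrow> bool" where
  "signal_structure Th S \<pi> \<longleftrightarrow> finite S \<and> S \<noteq> {} \<and>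
     (\<forall>s\<in>S. \<forall>\<theta>\<in>Th. 0 \<le> \<pi> s \<theta> \<and> \<pi> s \<theta> \<le> 1) \<and>
     (\<forall>\<theta>\<in>Th. (\<Sum>s\<in>S. \<pi> s \<theta>) = 1) \<and>
     (\<forall>s\<in>S. \<exists>\<theta>\<in>Th. \<pi> s \<theta> > 0)"

definition posterior :: "real set \<Rightarrow> (real \<Rightarrow> real) \<Rightarrow> ('s \<Rightarrow> real \<Rightarrow> real) \<Rightarrow> 's \<Rightarrow> real \<Rightarrow> real" where
  "posterior Th q \<pi> s \<theta> = q \<theta> * \<pi> s \<theta> / (\<Sum>\<theta>'\<in>Th. q \<theta>' * \<pi> s \<theta>')"

definition wage :: "real set \<Rightarrow> (real \<Rightarrow> real) set \<Rightarrow> 's \<Rightarrow> (real \<Rightarrow> real) \<Rightarrow> ('s \<Rightarrow> real \<Rightarrow> real) \<Rightarrow> real" where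
  "wage Th A s q \<pi> = Max ((\<lambda>a. \<Sum>\<theta>\<in>Th. posterior Th q \<pi> s \<theta> * a \<theta>) ` A)"

definition pay :: "real set \<Rightarrow> (real \<Rightarrow> real) set \<Rightarrow> (real \<Rightarrow> real) \<Rightarrow> (real \<Rightarrow> real)
     \<Rightarrow> 's set \<Rightarrow> ('s \<Rightarrow> real \<Rightarrow> real) \<Rightarrow> real" where
  "pay Th A p q S \<pi> = (\<Sum>\<theta>\<in>Th. p \<theta> * (\<Sum>s\<in>S. \<pi> s \<theta> * wage Th A s q \<pi>))"

definition LR_ge :: "real set \<Rightarrow> (real \<Rightarrow> real) \<Rightarrow> (real \<Rightarrow> real) \<Rightarrow> bool" where
  "LR_ge Th q' q \<longleftrightarrow> (\<forall>\<theta>\<in>Th. \<forall>\<theta>'\<in>Th. \<theta>' > \<theta> \<longrightarrow> q \<theta> * q' \<theta>' \<ge> q \<theta>' * q' \<theta>)"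

definition garbling_ge :: "real set \<Rightarrow> 't set \<Rightarrow> ('t \<Rightarrow> real \<Rightarrow> real) \<Rightarrow> 's set \<Rightarrow> ('s \<Rightarrow> real \<Rightarrow> real) \<Rightarrow> bool" where
  "garbling_ge Th S' \<pi>' S \<pi> \<longleftrightarrow> (\<exists>g :: 's \<Rightarrow> 't \<Rightarrow> real.
     (\<forall>s\<in>S. \<forall>s'\<in>S'. 0 \<le> g s s' \<and> g s s' \<le> 1) \<and>
     (\<forall>s'\<in>S'. (\<Sum>s\<in>S. g s s') = 1) \<and>
     (\<forall>s\<in>S. \<forall>\<theta>\<in>Th. \<pi> s \<theta> = (\<Sum>s'\<in>S'. g s s' * \<pi>' s' \<theta>)))"

definition MLR :: "real set \<Rightarrow> real set \<Rightarrow> (real \<Rightarrow> real \<Rightarrow> real) \<Rightarrow> bool" where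
  "MLR Th S \<pi> \<longleftrightarrow> (\<forall>s\<in>S. \<forall>s'\<in>S. \<forall>\<theta>\<in>Th. \<forall>\<theta>'\<in>Th. s' > s \<longrightarrow> \<theta>' > \<theta> \<longrightarrow>
     \<pi> s \<theta> * \<pi> s' \<theta>' \<ge> \<pi> s \<theta>' * \<pi> s' \<theta>)"

end

theory Submission
  imports Defs
begin

text \<open>
Write the pay as the sum over signals s of P(s) w(s), where P(s) is the probability of s under the
true distribution p and w(s) is the wage. The garbling expresses a coarse signal s as a mixture of
fine signals s' with weights g(s|s') Q'(s'), where Q'(s') is the perceived probability of s'. With
respect to these weights, P(s) is the average of the fine posterior means of the likelihood ratio
p/q, and Q(s) w(s) is the average of the fine posterior means of a task a that is optimal at s.
Under MLR both posterior means increase with s' (p/q because p dominates q in likelihood ratio, a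
because the firm is monotone), so Chebyshev's sum inequality bounds P(s) w(s) by the sum over s' of
g(s|s') P'(s') times the posterior mean of a at s', and that posterior mean is at most the fine
wage w'(s'). Summing over s, with g(.|s') summing to 1, gives the claim.
\<close>

lemma sum_sum_nonneg_of_swap_nonneg:
  fixes h :: "'i \<Rightarrow> 'i \<Rightarrow> 'a::linordered_idom"
  assumes "\<And>i j. i \<in> I \<Longrightarrow> j \<in> I \<Longrightarrow> 0 \<le> h i j + h j i"
  shows "0 \<le> (\<Sum>i\<in>I. \<Sum>j\<in>I. h i j)"
proof -
  have "(\<Sum>i\<in>I. \<Sum>j\<in>I. h i j + h j i) = (\<Sum>i\<in>I. \<Sum>j\<in>I. h i j) + (\<Sum>i\<in>I. \<Sum>j\<in>I. h i j)"
    by (simp add: sum.distrib sum.swap[of "\<lambda>i j. h j i"])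
  moreover have "0 \<le> (\<Sum>i\<in>I. \<Sum>j\<in>I. h i j + h j i)"
    using assms by (intro sum_nonneg) auto
  ultimately show ?thesis
    by simp
qed

lemma sum_mult_sum_le_of_mono_likelihood_ratio:
  fixes \<mu> \<nu> f :: "'i::linorder \<Rightarrow> 'a::linordered_idom"
  assumes f_mono: "\<And>x y. x \<in> I \<Longrightarrow> y \<in> I \<Longrightarrow> x < y \<Longrightarrow> f x \<le> f y"
    and ratio_mono: "\<And>x y. x \<in> I \<Longrightarrow> y \<in> I \<Longrightarrow> x < y \<Longrightarrow> \<mu> y * \<nu> x \<le> \<mu> x * \<nu> y"
  shows "(\<Sum>x\<in>I. \<nu> x) * (\<Sum>x\<in>I. \<mu> x * f x) \<le> (\<Sum>x\<in>I. \<mu> x) * (\<Sum>x\<in>I. \<nu> x * f x)"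
proof -
  define h where "h x y = \<mu> x * \<nu> y * (f y - f x)" for x y
  have "0 \<le> (\<Sum>x\<in>I. \<Sum>y\<in>I. h x y)"
  proof (rule sum_sum_nonneg_of_swap_nonneg)
    fix x y assume "x \<in> I" "y \<in> I"
    then have "0 \<le> (f y - f x) * (\<mu> x * \<nu> y - \<mu> y * \<nu> x)"
      using f_mono ratio_mono by (cases x y rule: linorder_cases) (auto simp: mult_nonpos_nonpos)
    then show "0 \<le> h x y + h y x"
      by (simp add: h_def algebra_simps)
  qed
  also have "(\<Sum>x\<in>I. \<Sum>y\<in>I. h x y) =
      (\<Sum>x\<in>I. \<mu> x) * (\<Sum>x\<in>I. \<nu> x * f x) - (\<Sum>x\<in>I. \<mu> x * f x) * (\<Sum>x\<in>I. \<nu> x)"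
    unfolding sum_product h_def right_diff_distrib sum_subtractf by (simp add: mult_ac)
  finally show ?thesis by (simp add: mult.commute)
qed

lemma Chebyshev_sum_weighted:
  fixes l X Y :: "'i::linorder \<Rightarrow> 'a::linordered_idom"
  assumes l_nonneg: "\<And>i. i \<in> I \<Longrightarrow> 0 \<le> l i"
    and X_mono: "\<And>i j. i \<in> I \<Longrightarrow> j \<in> I \<Longrightarrow> i < j \<Longrightarrow> X i \<le> X j"
    and Y_mono: "\<And>i j. i \<in> I \<Longrightarrow> j \<in> I \<Longrightarrow> i < j \<Longrightarrow> Y i \<le> Y j"
  shows "(\<Sum>i\<in>I. l i * X i) * (\<Sum>i\<in>I. l i * Y i) \<le> (\<Sum>i\<in>I. l i) * (\<Sum>i\<in>I. l i * X i * Y i)"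
proof -
  define h where "h i j = l i * X i * Y i * l j - l i * Y i * (l j * X j)" for i j
  have "0 \<le> (\<Sum>i\<in>I. \<Sum>j\<in>I. h i j)"
  proof (rule sum_sum_nonneg_of_swap_nonneg)
    fix i j assume ij: "i \<in> I" "j \<in> I"
    then have "0 \<le> (X i - X j) * (Y i - Y j)"
      using X_mono Y_mono by (cases i j rule: linorder_cases) (auto simp: mult_nonpos_nonpos)
    with ij l_nonneg have "0 \<le> (l i * l j) * ((X i - X j) * (Y i - Y j))"
      by simp
    then show "0 \<le> h i j + h j i"
      by (simp add: h_def algebra_simps)
  qed
  also have "(\<Sum>i\<in>I. \<Sum>j\<in>I. h i j) =
      (\<Sum>i\<in>I. l i * X i * Y i) * (\<Sum>i\<in>I. l i) - (\<Sum>i\<in>I. l i * Y i) * (\<Sum>i\<in>I. l i * X i)"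
    unfolding sum_product h_def sum_subtractf ..
  finally show ?thesis by (simp add: mult.commute)
qed

definition signal_prob :: "real set \<Rightarrow> (real \<Rightarrow> real) \<Rightarrow> ('s \<Rightarrow> real \<Rightarrow> real) \<Rightarrow> 's \<Rightarrow> real" where
  "signal_prob Th q \<pi> s = (\<Sum>\<theta>\<in>Th. q \<theta> * \<pi> s \<theta>)"

definition posterior_mean ::
    "real set \<Rightarrow> (real \<Rightarrow> real) \<Rightarrow> ('s \<Rightarrow> real \<Rightarrow> real) \<Rightarrow> 's \<Rightarrow> (real \<Rightarrow> real) \<Rightarrow> real" where
  "posterior_mean Th q \<pi> s f = (\<Sum>\<theta>\<in>Th. posterior Th q \<pi> s \<theta> * f \<theta>)"

lemma posterior_mean_eq:
  "posterior_mean Th q \<pi> s f = (\<Sum>\<theta>\<in>Th. q \<theta> * \<pi> s \<theta> * f \<theta>) / signal_prob Th q \<pi> s"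
  unfolding posterior_mean_def posterior_def signal_prob_def sum_divide_distrib
  by (simp add: algebra_simps)

lemma signal_prob_mult_posterior_mean:
  assumes "signal_prob Th q \<pi> s \<noteq> 0"
  shows "signal_prob Th q \<pi> s * posterior_mean Th q \<pi> s f = (\<Sum>\<theta>\<in>Th. q \<theta> * \<pi> s \<theta> * f \<theta>)"
  using assms by (simp add: posterior_mean_eq)

lemma posterior_mean_const:
  assumes "signal_prob Th q \<pi> s \<noteq> 0"
  shows "posterior_mean Th q \<pi> s (\<lambda>_. c) = c"
  using assms by (simp add: posterior_mean_eq signal_prob_def flip: sum_distrib_right)

lemma signal_prob_change_prior:
  assumes "\<And>\<theta>. \<theta> \<in> Th \<Longrightarrow> q \<theta> \<noteq> 0"
  shows "signal_prob Th p \<pi> s = (\<Sum>\<theta>\<in>Th. q \<theta> * \<pi> s \<theta> * (p \<theta> / q \<theta>))"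
  unfolding signal_prob_def using assms by (intro sum.cong) auto

lemma signal_prob_eq_mult_posterior_mean_ratio:
  assumes "\<And>\<theta>. \<theta> \<in> Th \<Longrightarrow> q \<theta> \<noteq> 0" and "signal_prob Th q \<pi> s \<noteq> 0"
  shows "signal_prob Th p \<pi> s = signal_prob Th q \<pi> s * posterior_mean Th q \<pi> s (\<lambda>\<theta>. p \<theta> / q \<theta>)"
  unfolding signal_prob_mult_posterior_mean[OF assms(2)] by (rule signal_prob_change_prior[OF assms(1)])

lemma signal_prob_pos:
  assumes "signal_structure Th S \<pi>" and "finite Th" and "\<And>\<theta>. \<theta> \<in> Th \<Longrightarrow> 0 < q \<theta>" and "s \<in> S"
  shows "0 < signal_prob Th q \<pi> s"
proof -
  obtain \<theta> where "\<theta> \<in> Th" "0 < \<pi> s \<theta>"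
    using assms(1,4) unfolding signal_structure_def by blast
  with assms(3) have "0 < q \<theta> * \<pi> s \<theta>" by simp
  also have "\<dots> \<le> signal_prob Th q \<pi> s"
    unfolding signal_prob_def using assms \<open>\<theta> \<in> Th\<close>
    by (intro member_le_sum) (auto simp: signal_structure_def less_imp_le)
  finally show ?thesis .
qed

lemma wage_eq_Max_posterior_mean: "wage Th A s q \<pi> = Max (posterior_mean Th q \<pi> s ` A)"
  unfolding wage_def posterior_mean_def ..

lemma pay_eq_sum_signal_prob: "pay Th A p q S \<pi> = (\<Sum>s\<in>S. signal_prob Th p \<pi> s * wage Th A s q \<pi>)"
  unfolding pay_def signal_prob_def sum_distrib_left sum_distrib_right
  by (subst sum.swap) (simp add: mult_ac)

lemma ratio_mono_if_LR_ge:
  assumes "LR_ge Th p q" and "\<And>\<theta>. \<theta> \<in> Th \<Longrightarrow> 0 < q \<theta>"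
    and "\<theta> \<in> Th" "\<theta>' \<in> Th" "\<theta> < \<theta>'"
  shows "p \<theta> / q \<theta> \<le> p \<theta>' / q \<theta>'"
  using assms unfolding LR_ge_def by (simp add: divide_simps mult.commute)

lemma posterior_mean_mono_if_MLR:
  assumes "MLR Th S \<pi>" and "\<And>\<theta>. \<theta> \<in> Th \<Longrightarrow> 0 \<le> q \<theta>"
    and "s \<in> S" "s' \<in> S" "s < s'"
    and "0 < signal_prob Th q \<pi> s" "0 < signal_prob Th q \<pi> s'"
    and f_mono: "\<And>\<theta> \<theta>'. \<theta> \<in> Th \<Longrightarrow> \<theta>' \<in> Th \<Longrightarrow> \<theta> < \<theta>' \<Longrightarrow> f \<theta> \<le> f \<theta>'"
  shows "posterior_mean Th q \<pi> s f \<le> posterior_mean Th q \<pi> s' f"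
proof -
  have "signal_prob Th q \<pi> s' * (\<Sum>\<theta>\<in>Th. q \<theta> * \<pi> s \<theta> * f \<theta>)
      \<le> signal_prob Th q \<pi> s * (\<Sum>\<theta>\<in>Th. q \<theta> * \<pi> s' \<theta> * f \<theta>)"
    unfolding signal_prob_def
  proof (rule sum_mult_sum_le_of_mono_likelihood_ratio[OF f_mono])
    fix \<theta> \<theta>' assume "\<theta> \<in> Th" "\<theta>' \<in> Th" "\<theta> < \<theta>'"
    with assms(1,3-5) have "\<pi> s \<theta>' * \<pi> s' \<theta> \<le> \<pi> s \<theta> * \<pi> s' \<theta>'"
      unfolding MLR_def by blast
    with assms(2) \<open>\<theta> \<in> Th\<close> \<open>\<theta>' \<in> Th\<close>
    have "(q \<theta> * q \<theta>') * (\<pi> s \<theta>' * \<pi> s' \<theta>) \<le> (q \<theta> * q \<theta>') * (\<pi> s \<theta> * \<pi> s' \<theta>')"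
      by (intro mult_left_mono) auto
    then show "q \<theta>' * \<pi> s \<theta>' * (q \<theta> * \<pi> s' \<theta>) \<le> q \<theta> * \<pi> s \<theta> * (q \<theta>' * \<pi> s' \<theta>')"
      by (simp add: mult_ac)
  qed
  with assms(6,7) show ?thesis
    by (simp add: posterior_mean_eq divide_simps mult.commute)
qed

lemma sum_garbling_eq:
  fixes g :: "'s \<Rightarrow> 't \<Rightarrow> real"
  assumes "\<And>\<theta>. \<theta> \<in> Th \<Longrightarrow> \<pi> s \<theta> = (\<Sum>s'\<in>S'. g s s' * \<pi>' s' \<theta>)"
    and "\<And>s'. s' \<in> S' \<Longrightarrow> signal_prob Th q \<pi>' s' \<noteq> 0"
  shows "(\<Sum>\<theta>\<in>Th. q \<theta> * \<pi> s \<theta> * f \<theta>)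
    = (\<Sum>s'\<in>S'. g s s' * signal_prob Th q \<pi>' s' * posterior_mean Th q \<pi>' s' f)"
proof -
  have "(\<Sum>\<theta>\<in>Th. q \<theta> * \<pi> s \<theta> * f \<theta>) = (\<Sum>\<theta>\<in>Th. \<Sum>s'\<in>S'. g s s' * (q \<theta> * \<pi>' s' \<theta> * f \<theta>))"
    using assms(1) by (intro sum.cong) (auto simp: sum_distrib_left sum_distrib_right mult_ac)
  also have "\<dots> = (\<Sum>s'\<in>S'. g s s' * (\<Sum>\<theta>\<in>Th. q \<theta> * \<pi>' s' \<theta> * f \<theta>))"
    unfolding sum_distrib_left by (rule sum.swap)
  also have "\<dots> = (\<Sum>s'\<in>S'. g s s' * signal_prob Th q \<pi>' s' * posterior_mean Th q \<pi>' s' f)"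
    using assms(2) by (intro sum.cong) (simp_all add: signal_prob_mult_posterior_mean mult.assoc)
  finally show ?thesis .
qed

lemma signal_prob_mult_posterior_mean_le_garbled:
  fixes S :: "'s set" and \<pi> :: "'s \<Rightarrow> real \<Rightarrow> real"
    and S' :: "real set" and \<pi>' :: "real \<Rightarrow> real \<Rightarrow> real" and g :: "'s \<Rightarrow> real \<Rightarrow> real"
  assumes "finite Th" and q_pos: "\<And>\<theta>. \<theta> \<in> Th \<Longrightarrow> 0 < q \<theta>" and "LR_ge Th p q"
    and "signal_structure Th S \<pi>" and "s \<in> S"
    and \<pi>': "signal_structure Th S' \<pi>'" and "MLR Th S' \<pi>'"
    and g_nonneg: "\<And>s'. s' \<in> S' \<Longrightarrow> 0 \<le> g s s'"
    and garble: "\<And>\<theta>. \<theta> \<in> Th \<Longrightarrow> \<pi> s \<theta> = (\<Sum>s'\<in>S'. g s s' * \<pi>' s' \<theta>)"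
    and f_mono: "\<And>\<theta> \<theta>'. \<theta> \<in> Th \<Longrightarrow> \<theta>' \<in> Th \<Longrightarrow> \<theta> < \<theta>' \<Longrightarrow> f \<theta> \<le> f \<theta>'"
  shows "signal_prob Th p \<pi> s * posterior_mean Th q \<pi> s f
    \<le> (\<Sum>s'\<in>S'. g s s' * signal_prob Th p \<pi>' s' * posterior_mean Th q \<pi>' s' f)"
proof -
  let ?Q = "signal_prob Th q \<pi> s" and ?Q' = "signal_prob Th q \<pi>'" and ?E' = "posterior_mean Th q \<pi>'"
  define l where "l \<theta> = p \<theta> / q \<theta>" for \<theta>
  define weight where "weight s' = g s s' * ?Q' s'" for s'
  have q_nonzero: "q \<theta> \<noteq> 0" if "\<theta> \<in> Th" for \<theta>
    using q_pos[OF that] by simp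
  have Q_pos: "0 < ?Q"
    by (rule signal_prob_pos[OF \<open>signal_structure Th S \<pi>\<close> \<open>finite Th\<close> q_pos \<open>s \<in> S\<close>])
  have Q'_pos: "0 < ?Q' s'" if "s' \<in> S'" for s'
    by (rule signal_prob_pos[OF \<pi>' \<open>finite Th\<close> q_pos that])
  then have Q'_nonzero: "?Q' s' \<noteq> 0" if "s' \<in> S'" for s'
    using that by force
  have decomp: "(\<Sum>\<theta>\<in>Th. q \<theta> * \<pi> s \<theta> * h \<theta>) = (\<Sum>s'\<in>S'. weight s' * ?E' s' h)" for h
    unfolding weight_def by (intro sum_garbling_eq garble Q'_nonzero)
  have "?Q = (\<Sum>\<theta>\<in>Th. q \<theta> * \<pi> s \<theta> * 1)"
    by (simp add: signal_prob_def)
  also have "\<dots> = (\<Sum>s'\<in>S'. weight s' * ?E' s' (\<lambda>_. 1))"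
    by (rule decomp)
  also have "\<dots> = (\<Sum>s'\<in>S'. weight s')"
    by (simp add: posterior_mean_const Q'_nonzero cong: sum.cong)
  finally have Q_eq: "?Q = (\<Sum>s'\<in>S'. weight s')" .
  have "signal_prob Th p \<pi> s = (\<Sum>\<theta>\<in>Th. q \<theta> * \<pi> s \<theta> * l \<theta>)"
    unfolding l_def by (rule signal_prob_change_prior[OF q_nonzero])
  also have "\<dots> = (\<Sum>s'\<in>S'. weight s' * ?E' s' l)"
    by (rule decomp)
  finally have P_eq: "signal_prob Th p \<pi> s = (\<Sum>s'\<in>S'. weight s' * ?E' s' l)" .
  have QE_eq: "?Q * posterior_mean Th q \<pi> s f = (\<Sum>s'\<in>S'. weight s' * ?E' s' f)"
    using Q_pos by (simp add: signal_prob_mult_posterior_mean decomp)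
  have E'_mono: "?E' s' h \<le> ?E' s'' h"
    if "s' \<in> S'" "s'' \<in> S'" "s' < s''" and "\<And>\<theta> \<theta>'. \<theta> \<in> Th \<Longrightarrow> \<theta>' \<in> Th \<Longrightarrow> \<theta> < \<theta>' \<Longrightarrow> h \<theta> \<le> h \<theta>'"
    for s' s'' h
    using posterior_mean_mono_if_MLR[OF \<open>MLR Th S' \<pi>'\<close>] q_pos Q'_pos that by (simp add: less_imp_le)
  have "(\<Sum>s'\<in>S'. weight s' * ?E' s' l) * (\<Sum>s'\<in>S'. weight s' * ?E' s' f)
      \<le> (\<Sum>s'\<in>S'. weight s') * (\<Sum>s'\<in>S'. weight s' * ?E' s' l * ?E' s' f)"
    using g_nonneg Q'_pos
    by (intro Chebyshev_sum_weighted E'_mono f_mono)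
      (auto simp: weight_def l_def ratio_mono_if_LR_ge[OF \<open>LR_ge Th p q\<close> q_pos] less_imp_le)
  then have "?Q * (signal_prob Th p \<pi> s * posterior_mean Th q \<pi> s f)
      \<le> ?Q * (\<Sum>s'\<in>S'. weight s' * ?E' s' l * ?E' s' f)"
    unfolding P_eq Q_eq[symmetric] QE_eq[symmetric] by (simp add: mult_ac)
  then have "signal_prob Th p \<pi> s * posterior_mean Th q \<pi> s f \<le> (\<Sum>s'\<in>S'. weight s' * ?E' s' l * ?E' s' f)"
    using Q_pos by simp
  also have "\<dots> = (\<Sum>s'\<in>S'. g s s' * signal_prob Th p \<pi>' s' * ?E' s' f)"
    unfolding weight_def l_def
    by (intro sum.cong) (simp_all add: signal_prob_eq_mult_posterior_mean_ratio[where p = p, OF q_nonzero Q'_nonzero])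
  finally show ?thesis .
qed

lemma signal_pay_le_garbled_pay:
  fixes S :: "'s set" and \<pi> :: "'s \<Rightarrow> real \<Rightarrow> real"
    and S' :: "real set" and \<pi>' :: "real \<Rightarrow> real \<Rightarrow> real" and g :: "'s \<Rightarrow> real \<Rightarrow> real"
  assumes "finite Th"
    and p_nonneg: "\<And>\<theta>. \<theta> \<in> Th \<Longrightarrow> 0 \<le> p \<theta>" and q_pos: "\<And>\<theta>. \<theta> \<in> Th \<Longrightarrow> 0 < q \<theta>"
    and "LR_ge Th p q"
    and "signal_structure Th S \<pi>" and "s \<in> S"
    and \<pi>': "signal_structure Th S' \<pi>'" and "MLR Th S' \<pi>'"
    and "monotone_firm Th A"
    and g_nonneg: "\<And>s'. s' \<in> S' \<Longrightarrow> 0 \<le> g s s'"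
    and garble: "\<And>\<theta>. \<theta> \<in> Th \<Longrightarrow> \<pi> s \<theta> = (\<Sum>s'\<in>S'. g s s' * \<pi>' s' \<theta>)"
  shows "signal_prob Th p \<pi> s * wage Th A s q \<pi>
    \<le> (\<Sum>s'\<in>S'. g s s' * (signal_prob Th p \<pi>' s' * wage Th A s' q \<pi>'))"
proof -
  have "finite A" "A \<noteq> {}"
    and a_mono: "\<And>a \<theta> \<theta>'. a \<in> A \<Longrightarrow> \<theta> \<in> Th \<Longrightarrow> \<theta>' \<in> Th \<Longrightarrow> \<theta> < \<theta>' \<Longrightarrow> a \<theta> < a \<theta>'"
    using \<open>monotone_firm Th A\<close> unfolding monotone_firm_def firm_def by auto
  then have "wage Th A s q \<pi> \<in> posterior_mean Th q \<pi> s ` A"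
    unfolding wage_eq_Max_posterior_mean by (intro Max_in) auto
  then obtain a where "a \<in> A" and a_opt: "wage Th A s q \<pi> = posterior_mean Th q \<pi> s a"
    by blast
  have "signal_prob Th p \<pi> s * wage Th A s q \<pi>
      \<le> (\<Sum>s'\<in>S'. g s s' * signal_prob Th p \<pi>' s' * posterior_mean Th q \<pi>' s' a)"
    unfolding a_opt
    by (rule signal_prob_mult_posterior_mean_le_garbled[where \<pi> = \<pi> and s = s and g = g,
          OF assms(1) q_pos assms(4-8) g_nonneg garble less_imp_le[OF a_mono[OF \<open>a \<in> A\<close>]]])
  also have "\<dots> \<le> (\<Sum>s'\<in>S'. g s s' * (signal_prob Th p \<pi>' s' * wage Th A s' q \<pi>'))"
  proof (rule sum_mono)
    fix s' assume "s' \<in> S'"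
    have "0 \<le> g s s' * signal_prob Th p \<pi>' s'"
      using g_nonneg[OF \<open>s' \<in> S'\<close>] \<pi>' \<open>s' \<in> S'\<close> p_nonneg
      unfolding signal_prob_def signal_structure_def by (intro mult_nonneg_nonneg sum_nonneg) auto
    moreover have "posterior_mean Th q \<pi>' s' a \<le> wage Th A s' q \<pi>'"
      unfolding wage_eq_Max_posterior_mean using \<open>finite A\<close> \<open>a \<in> A\<close> by simp
    ultimately show "g s s' * signal_prob Th p \<pi>' s' * posterior_mean Th q \<pi>' s' a
        \<le> g s s' * (signal_prob Th p \<pi>' s' * wage Th A s' q \<pi>')"
      by (metis mult.assoc mult_left_mono)
  qed
  finally show ?thesis .
qed

theorem corollary1:
  fixes Th :: "real set" and p q :: "real \<Rightarrow> real"
    and S :: "'s set" and \<pi> :: "'s \<Rightarrow> real \<Rightarrow> real"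
    and S' :: "real set" and \<pi>' :: "real \<Rightarrow> real \<Rightarrow> real"
    and A :: "(real \<Rightarrow> real) set"
  assumes "skill_types Th"
    and "full_support Th p" and "full_support Th q"
    and "LR_ge Th p q"
    and "signal_structure Th S \<pi>" and "signal_structure Th S' \<pi>'"
    and "garbling_ge Th S' \<pi>' S \<pi>"
    and "MLR Th S' \<pi>'"
    and "monotone_firm Th A"
  shows "pay Th A p q S' \<pi>' \<ge> pay Th A p q S \<pi>"
proof -
  obtain g :: "'s \<Rightarrow> real \<Rightarrow> real"
    where g_nonneg: "\<And>s s'. s \<in> S \<Longrightarrow> s' \<in> S' \<Longrightarrow> 0 \<le> g s s'"
      and g_sum: "\<And>s'. s' \<in> S' \<Longrightarrow> (\<Sum>s\<in>S. g s s') = 1"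
      and garble: "\<And>s \<theta>. s \<in> S \<Longrightarrow> \<theta> \<in> Th \<Longrightarrow> \<pi> s \<theta> = (\<Sum>s'\<in>S'. g s s' * \<pi>' s' \<theta>)"
    using assms(7) unfolding garbling_ge_def by blast
  have "pay Th A p q S \<pi> = (\<Sum>s\<in>S. signal_prob Th p \<pi> s * wage Th A s q \<pi>)"
    by (rule pay_eq_sum_signal_prob)
  also have "\<dots> \<le> (\<Sum>s\<in>S. \<Sum>s'\<in>S'. g s s' * (signal_prob Th p \<pi>' s' * wage Th A s' q \<pi>'))"
    using assms unfolding skill_types_def full_support_def
    by (intro sum_mono signal_pay_le_garbled_pay g_nonneg garble) auto
  also have "\<dots> = (\<Sum>s'\<in>S'. signal_prob Th p \<pi>' s' * wage Th A s' q \<pi>')"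
    using g_sum by (subst sum.swap) (simp add: sum_distrib_right[symmetric])
  also have "\<dots> = pay Th A p q S' \<pi>'"
    by (rule pay_eq_sum_signal_prob[symmetric])
  finally show ?thesis .
qed

end
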